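(* Let $d\ge 3$ and let $(q_1,\ldots,q_t)$ be a partition of $d$ with $q_1\ge q_2\ge\cdots\ge q_t\ge 1$ and $t\ge 2$. Let $G=K_{q_1,\ldots,q_t}$ be the complete multipartite graph of this type. Unless $G$ is the complete graph $K_3$ (i.e. $t=3$, $q_1=q_2=q_3=1$), the number $-(d-1)$ is not a root of the Ehrhart polynomial $i(\mathcal{P}_G,m)$ of the edge polytope $\mathcal{P}_G$.
   Context: The complete multipartite graph $K_{q_1,\ldots,q_t}$ has vertex set a disjoint union $V_1\cup\cdots\cup V_t$ with $|V_i|=q_i$ and edge set $\{\{u,v\}: u\in V_i, v\in V_j, i\ne j\}$; label its vertices $1,\ldots,d$. For an edge $e=\{i,j\}$ set $\rho(e)=\mathbf{e}_i+\mathbf{e}_j\in\mathbb{R}^d$. The edge polytope $\mathcal{P}_G$ is the convex hull of $\{\rho(e):e\in E(G)\}$. The Ehrhart polynomial $i(\mathcal{P},m)$ of an integral polytope $\mathcal{P}\subset\mathbb{R}^d$ is the polynomial with $i(\mathcal{P},m)=\#(m\mathcal{P}\cap\mathbb{Z}^d)$ for integers $m\ge0$. *)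

theory Defs
  imports "HOL-Analysis.Analysis" "HOL-Computational_Algebra.Polynomial"
begin

text \<open>rho(e) = e_i + e_j for an edge e = {i,j}; vertices are the elements of a finite type 'n,
  so the ambient space is real^'n with d = CARD('n).\<close>
definition rho_edge :: "'n::finite \<Rightarrow> 'n \<Rightarrow> real^'n" where
  "rho_edge i j = axis i 1 + axis j 1"

text \<open>Complete multipartite graph given by a block assignment blk: two vertices are adjacent
  iff they lie in different blocks.  Edge polytope = convex hull of rho(e) over all edges.\<close>
definition edge_polytope_multipartite :: "('n::finite \<Rightarrow> nat) \<Rightarrow> (real^'n) set" where
  "edge_polytope_multipartite blk =
     convex hull {rho_edge i j | i j. i \<noteq> j \<and> blk i \<noteq> blk j}"

definition lattice_count :: "(real^'n::finite) set \<Rightarrow> nat \<Rightarrow> nat" where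
  "lattice_count P m = card {x \<in> (\<lambda>y. real m *\<^sub>R y) ` P. \<forall>i. x $ i \<in> \<int>}"

definition is_ehrhart_poly :: "(real^'n::finite) set \<Rightarrow> real poly \<Rightarrow> bool" where
  "is_ehrhart_poly P p \<longleftrightarrow> (\<forall>m::nat. poly p (real m) = real (lattice_count P m))"

end

theory Submission
  imports Defs
begin

text \<open>A lattice point of \<open>m P\<close> is a vector \<open>g \<in> \<nat>\<^sup>d\<close> of total \<open>2m\<close> in which no part \<open>V\<^sub>k\<close>
  carries more than \<open>m\<close>; conversely such a vector splits greedily into \<open>m\<close> edge vectors.  At most
  one part can be overfull, so with \<open>q\<^sub>k = |V\<^sub>k|\<close> and \<open>r\<^sub>k = d - q\<^sub>k\<close>, \<open>i(P, m)\<close> is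
  \<open>C(2m + d - 1, d - 1)\<close> minus, for each \<open>k\<close>, the sum over \<open>j < m\<close> of
  \<open>C(j + r\<^sub>k - 1, r\<^sub>k - 1) C(2m - j + q\<^sub>k - 1, q\<^sub>k - 1)\<close>, and each of these terms is a polynomial
  in \<open>m\<close>.  At \<open>m = 1 - d\<close> the binomial coefficients have negative arguments, and
  \<open>gbinomial_minus\<close> turns the value into \<open>\<plusminus>(N - \<Sum>\<^sub>k N\<^sub>k)\<close>, where \<open>N\<close> counts the vectors of
  total \<open>d - 2\<close> and \<open>N\<^sub>k\<close> those with less than \<open>q\<^sub>k\<close> outside \<open>V\<^sub>k\<close>.  For two parts these sets
  cover all vectors and overlap; for at least three parts and \<open>d \<ge> 4\<close> they are disjoint and
  miss a vector.  Either way \<open>N \<noteq> \<Sum>\<^sub>k N\<^sub>k\<close>.\<close>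

section \<open>Polynomiality of partial sums\<close>

lemma poly_antidifference_power: "\<exists>S::real poly. \<forall>x. poly S (x + 1) - poly S x = x ^ e"
proof (induction e rule: less_induct)
  case (less e)
  obtain S :: "nat \<Rightarrow> real poly" where S: "\<And>k x. k < e \<Longrightarrow> poly (S k) (x + 1) - poly (S k) x = x ^ k"
    using less by metis
  define T where "T = smult (1 / (real e + 1))
    (monom 1 (Suc e) - (\<Sum>k<e. smult (of_nat (Suc e choose k)) (S k)))"
  have "poly T (x + 1) - poly T x = x ^ e" for x
  proof -
    have "(x + 1) ^ Suc e = (\<Sum>k\<le>Suc e. of_nat (Suc e choose k) * x ^ k)"
      using binomial_ring[of x 1 "Suc e"] by simp
    also have "\<dots> = (\<Sum>k<e. of_nat (Suc e choose k) * x ^ k) + (real e + 1) * x ^ e + x ^ Suc e"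
      by (simp add: lessThan_Suc_atMost[symmetric])
    finally have binom: "(x + 1) ^ Suc e - x ^ Suc e - (\<Sum>k<e. of_nat (Suc e choose k) * x ^ k)
        = (real e + 1) * x ^ e" by simp
    have "poly T (x + 1) - poly T x = (1 / (real e + 1)) * ((x + 1) ^ Suc e - x ^ Suc e
        - (\<Sum>k<e. of_nat (Suc e choose k) * (poly (S k) (x + 1) - poly (S k) x)))"
      by (simp add: T_def poly_monom poly_sum algebra_simps sum_subtractf)
    also have "\<dots> = x ^ e"
      using binom by (simp add: S)
    finally show ?thesis .
  qed
  then show ?case by blast
qed

lemma poly_partial_sum_power:
  "\<exists>T::real poly. (\<forall>m::nat. poly T (real m) = (\<Sum>j<m. real j ^ e)) \<and>
     (\<forall>n::nat. poly T (- real n) = - (\<Sum>j=1..n. (- real j) ^ e))"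
proof -
  obtain S :: "real poly" where S: "\<And>x. poly S (x + 1) - poly S x = x ^ e"
    using poly_antidifference_power by blast
  define T where "T = S - [:poly S 0:]"
  have up: "poly S (1 + real m) = poly S (real m) + real m ^ e" for m
    using S[of "real m"] by (simp add: add.commute)
  have down: "poly S (- real n) = poly S (- real (Suc n)) + (- real (Suc n)) ^ e" for n
    using S[of "- real (Suc n)"] by simp
  have "poly T (real m) = (\<Sum>j<m. real j ^ e)" for m
    by (induction m) (simp_all add: T_def up)
  moreover have "poly T (- real n) = - (\<Sum>j=1..n. (- real j) ^ e)" for n
    by (induction n) (simp_all add: T_def down)
  ultimately show ?thesis by blast
qed

text \<open>Polynomial functions of two variables, encoded as polynomials in \<open>y\<close> whose coefficients
  are polynomials in \<open>x\<close>.\<close>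

definition poly2_fun :: "(real \<Rightarrow> real \<Rightarrow> real) \<Rightarrow> bool" where
  "poly2_fun H \<longleftrightarrow> (\<exists>P::real poly poly. \<forall>x y. H x y = poly (poly P [:y:]) x)"

lemma poly2_fun_const: "poly2_fun (\<lambda>x y. c)"
  unfolding poly2_fun_def by (rule exI[of _ "[:[:c:]:]"]) simp

lemma poly2_fun_fst: "poly2_fun (\<lambda>x y. x)"
  unfolding poly2_fun_def by (rule exI[of _ "[:[:0, 1:]:]"]) simp

lemma poly2_fun_snd: "poly2_fun (\<lambda>x y. y)"
  unfolding poly2_fun_def by (rule exI[of _ "[:0, 1:]"]) simp

lemma poly2_fun_add: "poly2_fun f \<Longrightarrow> poly2_fun g \<Longrightarrow> poly2_fun (\<lambda>x y. f x y + g x y)"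
  unfolding poly2_fun_def by (metis poly_add)

lemma poly2_fun_mult: "poly2_fun f \<Longrightarrow> poly2_fun g \<Longrightarrow> poly2_fun (\<lambda>x y. f x y * g x y)"
  unfolding poly2_fun_def by (metis poly_mult)

lemma poly2_fun_poly: "poly2_fun f \<Longrightarrow> poly2_fun (\<lambda>x y. poly p (f x y))"
  by (induction p) (simp_all add: poly2_fun_add poly2_fun_mult poly2_fun_const)

lemma poly2_fun_expansion:
  fixes P :: "real poly poly"
  assumes "\<forall>x y. H x y = poly (poly P [:y:]) x"
  shows "H x y = (\<Sum>i\<le>degree P. poly (coeff P i) x * y ^ i)"
  using assms by (simp add: poly_altdef[of P "[:y:]"] poly_sum poly_power mult_ac)

lemma poly2_fun_partial_sum:
  assumes "poly2_fun H"
  shows "\<exists>G::real poly. (\<forall>m::nat. poly G (real m) = (\<Sum>j<m. H (real m) (real j))) \<and>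
     (\<forall>n::nat. poly G (- real n) = - (\<Sum>j=1..n. H (- real n) (- real j)))"
proof -
  obtain P where P: "\<forall>x y. H x y = poly (poly P [:y:]) x"
    using assms poly2_fun_def by blast
  obtain T :: "nat \<Rightarrow> real poly" where
    T: "\<And>e m. poly (T e) (real m) = (\<Sum>j<m. real j ^ e)"
       "\<And>e n. poly (T e) (- real n) = - (\<Sum>j=1..n. (- real j) ^ e)"
    using poly_partial_sum_power by metis
  define G where "G = (\<Sum>i\<le>degree P. coeff P i * T i)"
  have "poly G (real m) = (\<Sum>j<m. H (real m) (real j))" for m
    unfolding G_def poly2_fun_expansion[OF P]
    by (simp add: poly_sum T sum_distrib_left mult_ac sum.swap[of _ "{..<m}"])
  moreover have "poly G (- real n) = - (\<Sum>j=1..n. H (- real n) (- real j))" for n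
    unfolding G_def poly2_fun_expansion[OF P]
    by (simp add: poly_sum T sum_distrib_left mult_ac sum_negf) (rule sum.swap)
  ultimately show ?thesis by blast
qed

lemma gbinomial_poly: "\<exists>P::real poly. \<forall>x. poly P x = x gchoose k"
proof -
  define P where "P = smult (1 / fact k) (\<Prod>i<k. [:- of_nat i, 1:] :: real poly)"
  have "poly P x = x gchoose k" for x
    by (simp add: P_def poly_prod gbinomial_prod_rev atLeast0LessThan)
  then show ?thesis by blast
qed

lemma poly_eqI_of_nat:
  fixes p q :: "real poly"
  assumes "\<And>m::nat. poly p (real m) = poly q (real m)"
  shows "p = q"
proof (rule ccontr)
  assume "p \<noteq> q"
  then have "finite {x. poly (p - q) x = 0}"
    by (intro poly_roots_finite) simp
  moreover have "range real \<subseteq> {x. poly (p - q) x = 0}"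
    using assms by auto
  ultimately have "finite (range (real :: nat \<Rightarrow> real))"
    by (rule finite_subset[rotated])
  then show False
    using finite_imageD[OF _ inj_of_nat] by blast
qed

section \<open>Counting weak compositions\<close>

definition compositions :: "'a set \<Rightarrow> nat \<Rightarrow> ('a \<Rightarrow> nat) set" where
  "compositions S a = {u. (\<forall>i. i \<notin> S \<longrightarrow> u i = 0) \<and> sum u S = a}"

lemma bij_betw_compositions_lists:
  assumes f: "bij_betw f {..<card S} S"
  shows "bij_betw (\<lambda>u. map (u \<circ> f) [0..<card S]) (compositions S a)
    {l. length l = card S \<and> sum_list l = a}" (is "bij_betw ?to_list _ _")
proof (rule bij_betw_imageI)
  have sum_to_list: "sum_list (?to_list u) = sum u S" for u
    using sum.reindex_bij_betw[OF f, of u] by (simp add: sum_list_distinct_conv_sum_set atLeast0LessThan)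
  show "inj_on ?to_list (compositions S a)"
  proof (rule inj_onI, rule ext)
    fix u v i
    assume u: "u \<in> compositions S a" and v: "v \<in> compositions S a" and eq: "?to_list u = ?to_list v"
    show "u i = v i"
    proof (cases "i \<in> S")
      case True
      then obtain k where "k < card S" "i = f k"
        using f by (auto simp: bij_betw_def)
      then show ?thesis
        using arg_cong[OF eq, of "\<lambda>l. l ! k"] by simp
    next
      case False
      then show ?thesis
        using u v by (simp add: compositions_def)
    qed
  qed
  show "?to_list ` compositions S a = {l. length l = card S \<and> sum_list l = a}"
  proof (intro equalityI subsetI)
    fix l assume "l \<in> ?to_list ` compositions S a"
    then show "l \<in> {l. length l = card S \<and> sum_list l = a}"
      using sum_to_list by (auto simp: compositions_def)
  next
    fix l assume l: "l \<in> {l. length l = card S \<and> sum_list l = a}"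
    define u where "u i = (if i \<in> S then l ! inv_into {..<card S} f i else 0)" for i
    have "?to_list u = l"
      using l f by (intro nth_equalityI) (auto simp: u_def bij_betw_def)
    moreover from this have "u \<in> compositions S a"
      using l sum_to_list[of u] by (simp add: compositions_def u_def)
    ultimately show "l \<in> ?to_list ` compositions S a"
      by blast
  qed
qed

lemma card_compositions:
  assumes "finite S"
  shows "card (compositions S a) = (a + card S - 1) choose a"
proof -
  obtain f where "bij_betw f {..<card S} S"
    using ex_bij_betw_nat_finite[OF assms] atLeast0LessThan by auto
  then show ?thesis
    using bij_betw_same_card[OF bij_betw_compositions_lists] card_length_sum_list by metis
qed

lemma card_compositions_nonempty:
  assumes "finite S" "S \<noteq> {}"
  shows "card (compositions S a) = (a + (card S - 1)) choose (card S - 1)"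
proof -
  have "card S \<ge> 1"
    using assms by (simp add: card_gt_0_iff Suc_le_eq)
  then show ?thesis
    using card_compositions[OF assms(1)] binomial_symmetric[of a "a + (card S - 1)"] by simp
qed

lemma finite_compositions:
  assumes "finite S" "S \<noteq> {}"
  shows "finite (compositions S a)"
  using card_compositions_nonempty[OF assms] by (intro card_ge_0_finite) simp

lemma sum_Compl_add:
  fixes f :: "'n::finite \<Rightarrow> 'a::comm_monoid_add"
  shows "sum f S + sum f (-S) = sum f UNIV"
  by (subst Compl_partition[of S, symmetric]) (rule sum.union_disjoint[symmetric]; auto)

lemma card_add_Compl:
  fixes S :: "'n::finite set"
  shows "card S + card (-S) = CARD('n)"
  using sum_Compl_add[of "\<lambda>_. 1::nat" S] by simp

lemma finite_fixed_total: "finite {x::'n::finite \<Rightarrow> nat. sum x UNIV = T}"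
  using finite_compositions[of "UNIV :: 'n set" T] by (simp add: compositions_def)

lemma card_fixed_total:
  "card {x::'n::finite \<Rightarrow> nat. sum x UNIV = T} = (T + (CARD('n) - 1)) choose (CARD('n) - 1)"
  using card_compositions_nonempty[of "UNIV :: 'n set" T] by (simp add: compositions_def)

lemma card_fixed_total_with_sum_on:
  fixes S :: "'n::finite set"
  assumes "R \<le> T"
  shows "card {x::'n \<Rightarrow> nat. sum x UNIV = T \<and> sum x S = R} =
    card (compositions S R) * card (compositions (-S) (T - R))"
proof -
  note split = sum_Compl_add[of _ S, symmetric]
  let ?join = "\<lambda>(v, u). \<lambda>i::'n. v i + u i :: nat"
  have "bij_betw ?join (compositions S R \<times> compositions (-S) (T - R))
      {x. sum x UNIV = T \<and> sum x S = R}"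
  proof (rule bij_betw_imageI)
    show "inj_on ?join (compositions S R \<times> compositions (-S) (T - R))"
    proof (rule inj_onI, clarsimp)
      fix v u v' u'
      assume "v \<in> compositions S R" "u \<in> compositions (-S) (T - R)"
        "v' \<in> compositions S R" "u' \<in> compositions (-S) (T - R)"
        and eq: "(\<lambda>i. v i + u i) = (\<lambda>i. v' i + u' i)"
      then have "v i = v' i \<and> u i = u' i" for i
        using fun_cong[OF eq, of i] by (cases "i \<in> S") (auto simp: compositions_def)
      then show "v = v' \<and> u = u'" by auto
    qed
    show "?join ` (compositions S R \<times> compositions (-S) (T - R)) =
        {x. sum x UNIV = T \<and> sum x S = R}"
    proof (intro equalityI subsetI)
      fix x assume "x \<in> ?join ` (compositions S R \<times> compositions (-S) (T - R))"
      then obtain v u where "v \<in> compositions S R" "u \<in> compositions (-S) (T - R)"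
        and x: "x = (\<lambda>i. v i + u i)" by auto
      then have "sum x S = R" "sum x (-S) = T - R"
        by (auto simp: compositions_def x sum.distrib intro!: sum.neutral)
      then show "x \<in> {x. sum x UNIV = T \<and> sum x S = R}"
        using split[of x] assms by simp
    next
      fix x assume x: "x \<in> {x. sum x UNIV = T \<and> sum x S = R}"
      define v where "v i = (if i \<in> S then x i else 0)" for i
      define u where "u i = (if i \<in> S then 0 else x i)" for i
      have "v \<in> compositions S R" "u \<in> compositions (-S) (T - R)"
        using x split[of x] by (auto simp: compositions_def v_def u_def)
      moreover have "x = ?join (v, u)"
        by (auto simp: v_def u_def)
      ultimately show "x \<in> ?join ` (compositions S R \<times> compositions (-S) (T - R))"
        by blast
    qed
  qed
  then show ?thesis
    by (simp add: bij_betw_same_card[symmetric] card_cartesian_product)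
qed

lemma card_fixed_total_with_sum_on_less:
  fixes S :: "'n::finite set"
  assumes "S \<noteq> {}" "-S \<noteq> {}" "c \<le> Suc T"
  shows "card {x::'n \<Rightarrow> nat. sum x UNIV = T \<and> sum x S < c} =
    (\<Sum>R<c. ((R + (card S - 1)) choose (card S - 1)) *
      ((T - R + (card (-S) - 1)) choose (card (-S) - 1)))"
proof -
  have pieces: "{x::'n \<Rightarrow> nat. sum x UNIV = T \<and> sum x S < c} =
      (\<Union>R<c. {x. sum x UNIV = T \<and> sum x S = R})"
    by auto
  have "finite {x::'n \<Rightarrow> nat. sum x UNIV = T \<and> sum x S = R}" for R
    by (rule finite_subset[OF _ finite_fixed_total[of T]]) auto
  then have "card {x::'n \<Rightarrow> nat. sum x UNIV = T \<and> sum x S < c} =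
      (\<Sum>R<c. card {x. sum x UNIV = T \<and> sum x S = R})"
    unfolding pieces by (intro card_UN_disjoint) auto
  also have "\<dots> = (\<Sum>R<c. card (compositions S R) * card (compositions (-S) (T - R)))"
    using assms(3) by (intro sum.cong refl card_fixed_total_with_sum_on) auto
  finally show ?thesis
    using assms(1,2) by (simp add: card_compositions_nonempty)
qed

section \<open>Lattice points of the dilated edge polytope\<close>

definition of_nat_vec :: "('n::finite \<Rightarrow> nat) \<Rightarrow> real^'n" where
  "of_nat_vec g = (\<chi> i. real (g i))"

definition block_bounded :: "('n::finite \<Rightarrow> nat) \<Rightarrow> nat \<Rightarrow> ('n \<Rightarrow> nat) set" where
  "block_bounded blk m = {g. sum g UNIV = 2 * m \<and> (\<forall>k. sum g (blk -` {k}) \<le> m)}"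

lemma rho_edge_nth: "rho_edge i j $ v = of_bool (v = i) + of_bool (v = j)"
  by (simp add: rho_edge_def axis_def)

lemma sum_rho_edge: "(\<Sum>v\<in>A. rho_edge i j $ v) = of_bool (i \<in> A) + of_bool (j \<in> A)"
  by (simp add: rho_edge_nth sum.distrib sum.delta)

lemma edge_polytope_multipartite_subset:
  "edge_polytope_multipartite blk \<subseteq>
    {y. (\<forall>i. 0 \<le> y $ i) \<and> (\<Sum>i\<in>UNIV. y $ i) = 2 \<and> (\<forall>k. (\<Sum>i\<in>blk -` {k}. y $ i) \<le> 1)}"
    (is "_ \<subseteq> ?C")
  unfolding edge_polytope_multipartite_def
proof (rule hull_minimal)
  show "convex ?C"
  proof (rule convexI)
    fix x y :: "real^'a" and u v :: real
    assume x: "x \<in> ?C" and y: "y \<in> ?C" and u: "0 \<le> u" and v: "0 \<le> v" and uv: "u + v = 1"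
    have lin: "(\<Sum>i\<in>A. u * x $ i + v * y $ i) = u * (\<Sum>i\<in>A. x $ i) + v * (\<Sum>i\<in>A. y $ i)" for A
      by (simp add: sum.distrib sum_distrib_left)
    have "u * (\<Sum>i\<in>blk -` {k}. x $ i) + v * (\<Sum>i\<in>blk -` {k}. y $ i) \<le> u * 1 + v * 1" for k
      using x y u v by (intro add_mono mult_left_mono) auto
    then show "u *\<^sub>R x + v *\<^sub>R y \<in> ?C"
      using x y u v uv by (simp add: lin)
  qed
  show "{rho_edge i j |i j. i \<noteq> j \<and> blk i \<noteq> blk j} \<subseteq> ?C"
  proof
    fix x assume "x \<in> {rho_edge i j |i j. i \<noteq> j \<and> blk i \<noteq> blk j}"
    then obtain i j where "blk i \<noteq> blk j" and x: "x = rho_edge i j"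
      by blast
    moreover have "0 \<le> rho_edge i j $ v" for v
      by (simp add: rho_edge_nth)
    ultimately show "x \<in> ?C"
      by (simp add: sum_rho_edge)
  qed
qed

lemma lattice_point_dilated_edge_polytope:
  assumes "x \<in> (\<lambda>y. real m *\<^sub>R y) ` edge_polytope_multipartite blk" "\<forall>i. x $ i \<in> \<int>"
  shows "x \<in> of_nat_vec ` block_bounded blk m"
proof -
  obtain y where y: "\<forall>i. 0 \<le> y $ i" "(\<Sum>i\<in>UNIV. y $ i) = 2" "\<And>k. (\<Sum>i\<in>blk -` {k}. y $ i) \<le> 1"
    and x: "x = real m *\<^sub>R y"
    using assms(1) edge_polytope_multipartite_subset by blast
  define g where "g i = nat \<lfloor>x $ i\<rfloor>" for i
  have g: "real (g i) = x $ i" for i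
    using assms(2) y(1) x by (auto simp: g_def elim!: Ints_cases)
  have sum_g: "real (sum g A) = real m * (\<Sum>i\<in>A. y $ i)" for A
    by (simp add: g x sum_distrib_left)
  have "real (sum g (blk -` {k})) \<le> real m" for k
    unfolding sum_g using mult_left_mono[OF y(3)] by simp
  moreover have "real (sum g UNIV) = real (2 * m)"
    unfolding sum_g y(2) by simp
  ultimately have "g \<in> block_bounded blk m"
    unfolding block_bounded_def of_nat_le_iff of_nat_eq_iff by simp
  moreover have "x = of_nat_vec g"
    by (simp add: of_nat_vec_def vec_eq_iff g)
  ultimately show ?thesis by blast
qed

lemma sum_block_sums:
  fixes g :: "'n::finite \<Rightarrow> 'a::comm_monoid_add"
  assumes "finite F" "range blk \<subseteq> F"
  shows "(\<Sum>k\<in>F. sum g (blk -` {k})) = sum g UNIV"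
  using sum.group[of UNIV F blk g] assms by (simp add: vimage_def)

lemma ex_max_on_finite:
  fixes f :: "'a \<Rightarrow> 'b::linorder"
  assumes "finite A" "A \<noteq> {}"
  shows "\<exists>a\<in>A. \<forall>b\<in>A. f b \<le> f a"
proof -
  have "Max (f ` A) \<in> f ` A"
    using assms by (intro Max_in) auto
  then obtain a where "Max (f ` A) = f a" "a \<in> A"
    by (rule imageE)
  moreover have "f b \<le> Max (f ` A)" if "b \<in> A" for b
    using assms(1) that by (intro Max_ge) auto
  ultimately show ?thesis
    by auto
qed

lemma ex_two_largest_values:
  fixes s :: "nat \<Rightarrow> nat"
  assumes "finite {k. s k \<noteq> 0}"
  obtains k1 k2 where "k1 \<noteq> k2" "\<And>k. s k \<le> s k1" "\<And>k. k \<noteq> k1 \<Longrightarrow> s k \<le> s k2"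
proof -
  define K where "K = {k. s k \<noteq> 0} \<union> {0, 1}"
  have "finite K"
    using assms by (simp add: K_def)
  then obtain k1 where k1: "k1 \<in> K" "\<forall>k\<in>K. s k \<le> s k1"
    using ex_max_on_finite[of K s] by (auto simp: K_def)
  have "K - {k1} \<noteq> {}"
    by (auto simp: K_def)
  with \<open>finite K\<close> obtain k2 where k2: "k2 \<in> K - {k1}" "\<forall>k\<in>K - {k1}. s k \<le> s k2"
    using ex_max_on_finite[of "K - {k1}" s] by auto
  have outside: "s k = 0" if "k \<notin> K" for k
    using that by (simp add: K_def)
  have "s k \<le> s k1" for k
    using k1 outside by (cases "k \<in> K") auto
  moreover have "s k \<le> s k2" if "k \<noteq> k1" for k
    using k2 outside that by (cases "k \<in> K") auto
  moreover have "k1 \<noteq> k2"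
    using k2(1) by auto
  ultimately show thesis
    using that by blast
qed

lemma sum_block_sums_le:
  fixes g :: "'n::finite \<Rightarrow> nat"
  assumes "finite F"
  shows "(\<Sum>k\<in>F. sum g (blk -` {k})) \<le> sum g UNIV"
proof -
  have "(\<Sum>k\<in>F. sum g (blk -` {k})) \<le> (\<Sum>k\<in>F \<union> range blk. sum g (blk -` {k}))"
    using assms by (intro sum_mono2) auto
  also have "\<dots> = sum g UNIV"
    using assms by (intro sum_block_sums) auto
  finally show ?thesis .
qed

text \<open>Take one unit from each of the two heaviest blocks: a third block could only stay overfull
  if all three carried \<open>m + 1\<close>, exceeding the total \<open>2m + 2\<close>.\<close>

lemma block_bounded_Suc_decompose:
  assumes g: "g \<in> block_bounded blk (Suc m)"
  obtains i j where "blk i \<noteq> blk j" "1 \<le> g i" "1 \<le> g j"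
    "(\<lambda>v. g v - of_bool (v = i) - of_bool (v = j)) \<in> block_bounded blk m"
proof -
  define s where "s k = sum g (blk -` {k})" for k
  have s_le: "s k \<le> Suc m" for k
    using g by (simp add: block_bounded_def s_def)
  have "finite {k. s k \<noteq> 0}"
    by (rule finite_subset[of _ "range blk"]) (auto simp: s_def)
  then obtain k1 k2 where k12: "k1 \<noteq> k2" and k1: "\<And>k. s k \<le> s k1"
    and k2: "\<And>k. k \<noteq> k1 \<Longrightarrow> s k \<le> s k2"
    by (rule ex_two_largest_values) auto
  have "1 \<le> s k2"
  proof (rule ccontr)
    assume "\<not> 1 \<le> s k2"
    then have "s k = 0" if "k \<noteq> k1" for k
      using k2[OF that] by simp
    then have "(\<Sum>k\<in>insert k1 (range blk). s k) = s k1"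
      by (simp add: sum.insert_remove)
    moreover have "(\<Sum>k\<in>insert k1 (range blk). s k) = 2 * Suc m"
      using sum_block_sums[of "insert k1 (range blk)" blk g] g
      by (simp add: s_def block_bounded_def subset_insertI)
    ultimately show False
      using s_le[of k1] by simp
  qed
  have block_pos: "\<exists>i. blk i = k \<and> 1 \<le> g i" if "1 \<le> s k" for k
  proof (rule ccontr)
    assume "\<not> ?thesis"
    then have "s k = 0"
      unfolding s_def by (intro sum.neutral) auto
    with that show False by simp
  qed
  obtain i where i: "blk i = k1" "1 \<le> g i"
    using block_pos[of k1] k1[of k2] \<open>1 \<le> s k2\<close> by auto
  obtain j where j: "blk j = k2" "1 \<le> g j"
    using block_pos[of k2] \<open>1 \<le> s k2\<close> by auto
  define h where "h v = g v - of_bool (v = i) - of_bool (v = j)" for v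
  have "g v = h v + of_bool (v = i) + of_bool (v = j)" for v
    using i j k12 by (auto simp: h_def)
  then have sum_h: "sum g A = sum h A + of_bool (i \<in> A) + of_bool (j \<in> A)" for A
    by (simp add: sum.distrib sum.delta)
  have "sum h (blk -` {k}) \<le> m" for k
  proof (cases "k = k1 \<or> k = k2")
    case True
    then show ?thesis
      using sum_h[of "blk -` {k}"] s_le[of k] i j unfolding s_def by auto
  next
    case False
    then have "s k + s k1 + s k2 \<le> 2 * Suc m"
      using sum_block_sums_le[of "{k, k1, k2}" g blk] g k12 by (simp add: s_def block_bounded_def)
    then have "s k \<le> m"
      using k1[of k] k2[of k] False by presburger
    then show ?thesis
      using sum_h[of "blk -` {k}"] unfolding s_def by simp
  qed
  moreover have "sum h UNIV = 2 * m"
    using sum_h[of UNIV] g by (simp add: block_bounded_def)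
  ultimately have "h \<in> block_bounded blk m"
    by (simp add: block_bounded_def)
  moreover have "blk i \<noteq> blk j"
    using i j k12 by simp
  ultimately show thesis
    using that i(2) j(2) unfolding h_def by blast
qed

lemma rho_edge_in_edge_polytope_multipartite:
  "blk i \<noteq> blk j \<Longrightarrow> rho_edge i j \<in> edge_polytope_multipartite blk"
  unfolding edge_polytope_multipartite_def by (intro hull_inc) auto

lemma of_nat_vec_in_dilated_edge_polytope:
  assumes "blk i0 \<noteq> blk j0" "g \<in> block_bounded blk m"
  shows "of_nat_vec g \<in> (\<lambda>y. real m *\<^sub>R y) ` edge_polytope_multipartite blk"
  using assms(2)
proof (induction m arbitrary: g)
  case 0
  then have "of_nat_vec g = real 0 *\<^sub>R rho_edge i0 j0"
    by (simp add: block_bounded_def of_nat_vec_def vec_eq_iff)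
  then show ?case
    using rho_edge_in_edge_polytope_multipartite[OF assms(1)] by blast
next
  case (Suc m)
  obtain i j where ij: "blk i \<noteq> blk j" "1 \<le> g i" "1 \<le> g j"
    and h: "(\<lambda>v. g v - of_bool (v = i) - of_bool (v = j)) \<in> block_bounded blk m"
    using block_bounded_Suc_decompose[OF Suc.prems] by blast
  obtain y where y: "y \<in> edge_polytope_multipartite blk"
    and h_vec: "of_nat_vec (\<lambda>v. g v - of_bool (v = i) - of_bool (v = j)) = real m *\<^sub>R y"
    using Suc.IH[OF h] by blast
  have "of_nat_vec g = rho_edge i j + real m *\<^sub>R y"
    using ij h_vec[symmetric] by (auto simp: of_nat_vec_def vec_eq_iff rho_edge_nth of_nat_diff)
  also have "\<dots> = real (Suc m) *\<^sub>R ((1 / real (Suc m)) *\<^sub>R rho_edge i j + (real m / real (Suc m)) *\<^sub>R y)"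
    by (simp add: scaleR_add_right)
  finally have g_vec: "of_nat_vec g = \<dots>" .
  moreover have "(1 / real (Suc m)) *\<^sub>R rho_edge i j + (real m / real (Suc m)) *\<^sub>R y
      \<in> edge_polytope_multipartite blk"
    unfolding edge_polytope_multipartite_def
    by (rule convexD[OF convex_convex_hull])
      (use rho_edge_in_edge_polytope_multipartite[OF ij(1)] y in
        \<open>auto simp: edge_polytope_multipartite_def field_simps\<close>)
  ultimately show ?case
    by (rule image_eqI)
qed

lemma lattice_count_edge_polytope_multipartite:
  assumes "blk i0 \<noteq> blk j0"
  shows "lattice_count (edge_polytope_multipartite blk) m = card (block_bounded blk m)"
proof -
  have "{x \<in> (\<lambda>y. real m *\<^sub>R y) ` edge_polytope_multipartite blk. \<forall>i. x $ i \<in> \<int>} =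
      of_nat_vec ` block_bounded blk m"
  proof (intro equalityI subsetI)
    fix x assume "x \<in> {x \<in> (\<lambda>y. real m *\<^sub>R y) ` edge_polytope_multipartite blk. \<forall>i. x $ i \<in> \<int>}"
    then show "x \<in> of_nat_vec ` block_bounded blk m"
      using lattice_point_dilated_edge_polytope by blast
  next
    fix x assume "x \<in> of_nat_vec ` block_bounded blk m"
    then show "x \<in> {x \<in> (\<lambda>y. real m *\<^sub>R y) ` edge_polytope_multipartite blk. \<forall>i. x $ i \<in> \<int>}"
      using of_nat_vec_in_dilated_edge_polytope[OF assms] by (auto simp: of_nat_vec_def)
  qed
  moreover have "inj_on of_nat_vec (block_bounded blk m)"
    by (rule inj_onI) (simp add: of_nat_vec_def vec_eq_iff fun_eq_iff)
  ultimately show ?thesis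
    unfolding lattice_count_def by (simp add: card_image)
qed

section \<open>The Ehrhart polynomial and its value at \<open>1 - d\<close>\<close>

definition binomial_convolution :: "nat \<Rightarrow> nat \<Rightarrow> nat \<Rightarrow> nat \<Rightarrow> nat" where
  "binomial_convolution a b c T = (\<Sum>R<c. ((R + a) choose a) * ((T - R + b) choose b))"

definition mass_outside_below :: "('n::finite \<Rightarrow> nat) \<Rightarrow> nat \<Rightarrow> nat \<Rightarrow> nat \<Rightarrow> ('n \<Rightarrow> nat) set" where
  "mass_outside_below blk k T c = {x. sum x UNIV = T \<and> sum x (- (blk -` {k})) < c}"

lemma card_mass_outside_below:
  fixes blk :: "'n::finite \<Rightarrow> nat"
  assumes "blk -` {k} \<noteq> {}" "- (blk -` {k}) \<noteq> {}" "c \<le> Suc T"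
  shows "card (mass_outside_below blk k T c) =
    binomial_convolution (card (- (blk -` {k})) - 1) (card (blk -` {k}) - 1) c T"
  using card_fixed_total_with_sum_on_less[of "- (blk -` {k})" c T] assms
  by (simp add: mass_outside_below_def binomial_convolution_def)

text \<open>Every point of total \<open>2m\<close> outside \<open>block_bounded blk m\<close> has exactly one overfull block, and
  a block is overfull iff less than \<open>m\<close> lies outside it.\<close>

lemma card_block_bounded:
  fixes blk :: "'n::finite \<Rightarrow> nat"
  assumes "range blk \<subseteq> {..<t}"
  shows "card (block_bounded blk m) + (\<Sum>k<t. card (mass_outside_below blk k (2 * m) m)) =
    card {x::'n \<Rightarrow> nat. sum x UNIV = 2 * m}"
proof -
  let ?heavy = "\<lambda>k. mass_outside_below blk k (2 * m) m"
  have split: "sum x (blk -` {k}) + sum x (- (blk -` {k})) = sum x UNIV" for x :: "'n \<Rightarrow> nat" and k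
    by (rule sum_Compl_add)
  have cover: "{x::'n \<Rightarrow> nat. sum x UNIV = 2 * m} = block_bounded blk m \<union> (\<Union>k<t. ?heavy k)"
  proof (intro equalityI subsetI)
    fix x :: "'n \<Rightarrow> nat" assume x: "x \<in> {x. sum x UNIV = 2 * m}"
    show "x \<in> block_bounded blk m \<union> (\<Union>k<t. ?heavy k)"
    proof (cases "x \<in> block_bounded blk m")
      case False
      then obtain k where "m < sum x (blk -` {k})"
        using x by (auto simp: block_bounded_def not_le)
      moreover from this have "k \<in> range blk"
        by (cases "blk -` {k} = {}") auto
      ultimately have "x \<in> ?heavy k" "k < t"
        using x split[of x k] assms by (auto simp: mass_outside_below_def)
      then show ?thesis
        by blast
    qed simp
  qed (auto simp: block_bounded_def mass_outside_below_def)
  have disjoint: "block_bounded blk m \<inter> ?heavy k = {}" for k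
  proof -
    have "x \<notin> ?heavy k" if "x \<in> block_bounded blk m" for x
    proof -
      have "sum x (blk -` {k}) \<le> m" "sum x UNIV = 2 * m"
        using that by (auto simp: block_bounded_def)
      then show ?thesis
        using split[of x k] by (simp add: mass_outside_below_def)
    qed
    then show ?thesis by blast
  qed
  have heavy_disjoint: "?heavy k \<inter> ?heavy l = {}" if "k \<noteq> l" for k l
  proof -
    have "x \<notin> ?heavy l" if "x \<in> ?heavy k" for x
    proof -
      have "sum x (blk -` {l}) \<le> sum x (- (blk -` {k}))"
        using \<open>k \<noteq> l\<close> by (intro sum_mono2) auto
      then show ?thesis
        using that split[of x l] by (simp add: mass_outside_below_def)
    qed
    then show ?thesis by blast
  qed
  have finite: "finite (?heavy k)" "finite (block_bounded blk m)" for k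
    by (auto intro: finite_subset[OF _ finite_fixed_total[of "2 * m"]]
        simp: mass_outside_below_def block_bounded_def)
  have "card (\<Union>k<t. ?heavy k) = (\<Sum>k<t. card (?heavy k))"
    using heavy_disjoint finite by (intro card_UN_disjoint) auto
  moreover have "card (block_bounded blk m \<union> (\<Union>k<t. ?heavy k)) =
      card (block_bounded blk m) + card (\<Union>k<t. ?heavy k)"
    using disjoint finite by (intro card_Un_disjoint) auto
  ultimately show ?thesis
    unfolding cover by simp
qed

lemma poly_double_binomial:
  "\<exists>P::real poly. (\<forall>m::nat. poly P (real m) = real ((2 * m + n) choose n)) \<and>
     poly P (- real n) = (-1) ^ n * real ((n - 1 + n) choose n)"
proof -
  obtain B :: "real poly" where B: "\<And>x. poly B x = x gchoose n"
    using gbinomial_poly by blast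
  define P where "P = pcompose B [:real n, 2:]"
  have "poly P (real m) = real ((2 * m + n) choose n)" for m
    by (simp add: P_def poly_pcompose B binomial_gbinomial algebra_simps)
  moreover have "poly P (- real n) = (-1) ^ n * real ((n - 1 + n) choose n)"
  proof (cases n)
    case (Suc n')
    then have "real n + real n - 1 = real (n - 1 + n)"
      by simp
    then show ?thesis
      by (simp add: P_def poly_pcompose B gbinomial_minus[of "real n"] binomial_gbinomial)
  qed (simp add: P_def poly_pcompose B)
  ultimately show ?thesis by blast
qed

text \<open>Evaluating the convolution polynomial at \<open>-(a + b + 1)\<close>: the first factor vanishes for
  \<open>j \<le> a\<close>, and for \<open>j = a + 1 + R\<close> both factors are binomial coefficients at negative arguments,
  which \<open>gbinomial_minus\<close> turns into the terms of a convolution again.\<close>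

lemma convolution_terms_at_negative:
  fixes a b :: nat
  defines "n \<equiv> a + b + 1"
  shows "(\<Sum>j=1..n. ((- real j + real a) gchoose a) * ((2 * (- real n) + real j + real b) gchoose b)) =
    (-1) ^ (a + b) * real (binomial_convolution a b (Suc b) (a + b))"
proof -
  define F where "F j = ((- real j + real a) gchoose a) * ((2 * (- real n) + real j + real b) gchoose b)" for j
  have vanish: "F j = 0" if "j \<in> {1..a}" for j
  proof -
    have "- real j + real a = real (a - j)"
      using that by (simp add: of_nat_diff)
    then have "(- real j + real a) gchoose a = real ((a - j) choose a)"
      by (simp only: binomial_gbinomial)
    also have "(a - j) choose a = 0"
      using that by (intro binomial_eq_0) auto
    finally show ?thesis
      by (simp add: F_def)
  qed
  have shifted: "F (R + Suc a) = (-1) ^ (a + b) * real (((R + a) choose a) * ((a + b - R + b) choose b))"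
    if "R \<le> b" for R
  proof -
    have "- real (R + Suc a) + real a = - (real R + 1)"
      by simp
    moreover have "real R + 1 + real a - 1 = real (R + a)"
      by simp
    ultimately have first: "(- real (R + Suc a) + real a) gchoose a = (-1) ^ a * real ((R + a) choose a)"
      by (simp only: gbinomial_minus binomial_gbinomial)
    have "2 * (- real n) + real (R + Suc a) + real b = - real (n - R)"
      using that by (simp add: n_def of_nat_diff)
    moreover have "real (n - R) + real b - 1 = real (a + b - R + b)"
      using that by (simp add: n_def of_nat_diff)
    ultimately have second: "(2 * (- real n) + real (R + Suc a) + real b) gchoose b =
        (-1) ^ b * real ((a + b - R + b) choose b)"
      by (simp only: gbinomial_minus binomial_gbinomial)
    show ?thesis
      unfolding F_def first second by (simp add: power_add)
  qed
  have "{1..n} = {1..a} \<union> {Suc a..Suc a + b}"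
    by (auto simp: n_def)
  then have "(\<Sum>j=1..n. F j) = (\<Sum>j=Suc a..Suc a + b. F j)"
    using vanish by (simp add: sum.union_disjoint)
  also have "\<dots> = (\<Sum>R\<le>b. F (R + Suc a))"
    using sum.shift_bounds_cl_nat_ivl[of F 0 "Suc a" b] by (simp add: atLeast0AtMost add.commute)
  also have "\<dots> = (\<Sum>R\<le>b. (-1) ^ (a + b) * real (((R + a) choose a) * ((a + b - R + b) choose b)))"
    by (intro sum.cong refl shifted) simp
  also have "\<dots> = (-1) ^ (a + b) * real (binomial_convolution a b (Suc b) (a + b))"
    by (simp add: binomial_convolution_def sum_distrib_left lessThan_Suc_atMost)
  finally show ?thesis
    by (simp add: F_def)
qed

lemma poly_binomial_convolution:
  "\<exists>G::real poly. (\<forall>m::nat. poly G (real m) = real (binomial_convolution a b m (2 * m))) \<and>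
     poly G (- real (a + b + 1)) = (-1) ^ (a + b + 1) * real (binomial_convolution a b (Suc b) (a + b))"
proof -
  obtain A B :: "real poly" where A: "\<And>x. poly A x = x gchoose a" and B: "\<And>x. poly B x = x gchoose b"
    using gbinomial_poly by metis
  define H where "H x y = ((y + real a) gchoose a) * ((2 * x - y + real b) gchoose b)" for x y
  have "poly2_fun (\<lambda>x y. poly A (y + real a) * poly B (2 * x + (-1) * y + real b))"
    by (intro poly2_fun_mult poly2_fun_poly poly2_fun_add poly2_fun_snd poly2_fun_fst poly2_fun_const)
  moreover have "(\<lambda>x y. poly A (y + real a) * poly B (2 * x + (-1) * y + real b)) = H"
    by (simp add: fun_eq_iff H_def A B)
  ultimately have "poly2_fun H"
    by simp
  then obtain G where G: "\<And>m::nat. poly G (real m) = (\<Sum>j<m. H (real m) (real j))"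
    "\<And>n::nat. poly G (- real n) = - (\<Sum>j=1..n. H (- real n) (- real j))"
    using poly2_fun_partial_sum by blast
  have "poly G (real m) = real (binomial_convolution a b m (2 * m))" for m
    unfolding G binomial_convolution_def of_nat_sum
  proof (rule sum.cong)
    fix j assume "j \<in> {..<m}"
    then have "real (2 * m - j + b) = 2 * real m - real j + real b"
      by (simp add: of_nat_diff)
    then show "H (real m) (real j) = real (((j + a) choose a) * ((2 * m - j + b) choose b))"
      unfolding H_def of_nat_mult binomial_gbinomial by (simp only: of_nat_add)
  qed simp
  moreover have "poly G (- real (a + b + 1)) =
      (-1) ^ (a + b + 1) * real (binomial_convolution a b (Suc b) (a + b))"
  proof -
    have "poly G (- real (a + b + 1)) = - (\<Sum>j=1..a + b + 1. H (- real (a + b + 1)) (- real j))"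
      by (rule G(2))
    also have "(\<Sum>j=1..a + b + 1. H (- real (a + b + 1)) (- real j)) =
        (-1) ^ (a + b) * real (binomial_convolution a b (Suc b) (a + b))"
      unfolding H_def diff_minus_eq_add by (rule convolution_terms_at_negative)
    finally show ?thesis
      by simp
  qed
  ultimately show ?thesis by blast
qed

lemma compl_block_nonempty:
  fixes blk :: "'a \<Rightarrow> nat"
  assumes "\<forall>k<t. blk -` {k} \<noteq> {}" "2 \<le> t" "k < t"
  shows "- (blk -` {k}) \<noteq> {}"
proof -
  define k' where "k' = (if k = 0 then 1 else 0 :: nat)"
  have "k' < t" "k' \<noteq> k"
    using assms(2) by (auto simp: k'_def)
  then show ?thesis
    using assms(1) by blast
qed

lemma lattice_count_edge_polytope_multipartite_formula:
  fixes blk :: "'n::finite \<Rightarrow> nat"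
  assumes "range blk \<subseteq> {..<t}" "\<forall>k<t. blk -` {k} \<noteq> {}" "2 \<le> t"
  shows "lattice_count (edge_polytope_multipartite blk) m +
      (\<Sum>k<t. binomial_convolution (card (- (blk -` {k})) - 1) (card (blk -` {k}) - 1) m (2 * m)) =
    (2 * m + (CARD('n) - 1)) choose (CARD('n) - 1)"
proof -
  have "blk -` {0} \<noteq> {}" "blk -` {1} \<noteq> {}"
    using assms(2,3) by auto
  then obtain i0 j0 where "blk i0 = 0" "blk j0 = 1"
    by blast
  then have "lattice_count (edge_polytope_multipartite blk) m = card (block_bounded blk m)"
    by (intro lattice_count_edge_polytope_multipartite[of blk i0 j0]) simp
  moreover have "card (mass_outside_below blk k (2 * m) m) =
      binomial_convolution (card (- (blk -` {k})) - 1) (card (blk -` {k}) - 1) m (2 * m)" if "k < t" for k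
    using that assms(2) compl_block_nonempty[OF assms(2,3) that]
    by (intro card_mass_outside_below) auto
  ultimately show ?thesis
    using card_block_bounded[OF assms(1), of m] card_fixed_total[where 'n='n, of "2 * m"] by simp
qed

lemma poly_at_minus_of_counting_formula:
  fixes p :: "real poly" and f a b :: "nat \<Rightarrow> nat"
  assumes count: "\<And>m. f m + (\<Sum>k<t. binomial_convolution (a k) (b k) m (2 * m)) = (2 * m + n) choose n"
    and p: "\<And>m. poly p (real m) = real (f m)"
    and n: "\<And>k. k < t \<Longrightarrow> a k + b k + 1 = n"
  shows "poly p (- real n) = (-1) ^ n * (real ((n - 1 + n) choose n) -
    (\<Sum>k<t. real (binomial_convolution (a k) (b k) (Suc (b k)) (a k + b k))))"
proof -
  obtain P where P: "\<And>m::nat. poly P (real m) = real ((2 * m + n) choose n)"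
    "poly P (- real n) = (-1) ^ n * real ((n - 1 + n) choose n)"
    using poly_double_binomial by blast
  have "\<forall>k. \<exists>G::real poly. (\<forall>m::nat. poly G (real m) = real (binomial_convolution (a k) (b k) m (2 * m))) \<and>
      poly G (- real (a k + b k + 1)) =
        (-1) ^ (a k + b k + 1) * real (binomial_convolution (a k) (b k) (Suc (b k)) (a k + b k))"
    using poly_binomial_convolution by blast
  then obtain G :: "nat \<Rightarrow> real poly" where
    G: "\<And>k m. poly (G k) (real m) = real (binomial_convolution (a k) (b k) m (2 * m))"
    "\<And>k. poly (G k) (- real (a k + b k + 1)) =
      (-1) ^ (a k + b k + 1) * real (binomial_convolution (a k) (b k) (Suc (b k)) (a k + b k))"
    by (auto dest!: choice)
  have "p = P - (\<Sum>k<t. G k)"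
  proof (rule poly_eqI_of_nat)
    fix m
    have "real (f m) = real ((2 * m + n) choose n) - (\<Sum>k<t. real (binomial_convolution (a k) (b k) m (2 * m)))"
      using count[of m] by (simp flip: of_nat_sum of_nat_add add: eq_diff_eq)
    then show "poly p (real m) = poly (P - (\<Sum>k<t. G k)) (real m)"
      by (simp add: p poly_sum P G)
  qed
  moreover have "poly (G k) (- real n) =
      (-1) ^ n * real (binomial_convolution (a k) (b k) (Suc (b k)) (a k + b k))" if "k < t" for k
    using G(2)[of k] unfolding n[OF that] .
  ultimately show ?thesis
    by (simp add: poly_sum P sum_distrib_left right_diff_distrib)
qed

lemma ehrhart_multipartite_at_one_minus_card:
  fixes blk :: "'n::finite \<Rightarrow> nat"
  assumes "range blk \<subseteq> {..<t}" "\<forall>k<t. blk -` {k} \<noteq> {}" "2 \<le> t"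
    and "is_ehrhart_poly (edge_polytope_multipartite blk) p"
  shows "poly p (- (real CARD('n) - 1)) = (-1) ^ (CARD('n) - 1) *
    (real (card {y::'n \<Rightarrow> nat. sum y UNIV = CARD('n) - 2}) -
     (\<Sum>k<t. real (card (mass_outside_below blk k (CARD('n) - 2) (card (blk -` {k}))))))"
proof -
  define n where "n = CARD('n) - 1"
  define a where "a k = card (- (blk -` {k})) - 1" for k
  define b where "b k = card (blk -` {k}) - 1" for k
  have block_card: "card (blk -` {k}) = Suc (b k)" and compl_card: "card (- (blk -` {k})) = Suc (a k)"
    and n: "a k + b k + 1 = n" if "k < t" for k
  proof -
    show "card (blk -` {k}) = Suc (b k)" "card (- (blk -` {k})) = Suc (a k)"
      using assms(2) compl_block_nonempty[OF assms(2,3) that] that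
      by (simp_all add: a_def b_def card_gt_0_iff Suc_pred)
    then show "a k + b k + 1 = n"
      using card_add_Compl[of "blk -` {k}"] by (simp add: n_def)
  qed
  have "poly p (- real n) = (-1) ^ n * (real ((n - 1 + n) choose n) -
      (\<Sum>k<t. real (binomial_convolution (a k) (b k) (Suc (b k)) (a k + b k))))"
  proof (rule poly_at_minus_of_counting_formula[OF _ _ n])
    show "lattice_count (edge_polytope_multipartite blk) m +
        (\<Sum>k<t. binomial_convolution (a k) (b k) m (2 * m)) = (2 * m + n) choose n" for m
      using lattice_count_edge_polytope_multipartite_formula[OF assms(1-3), of m]
      by (simp add: a_def b_def n_def)
    show "poly p (real m) = real (lattice_count (edge_polytope_multipartite blk) m)" for m
      using assms(4) by (simp add: is_ehrhart_poly_def)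
  qed
  moreover have "card {y::'n \<Rightarrow> nat. sum y UNIV = CARD('n) - 2} = (n - 1 + n) choose n"
    using card_fixed_total[where 'n='n, of "CARD('n) - 2"] by (simp add: n_def numeral_2_eq_2)
  moreover have "card (mass_outside_below blk k (CARD('n) - 2) (card (blk -` {k}))) =
      binomial_convolution (a k) (b k) (Suc (b k)) (a k + b k)" if "k < t" for k
  proof -
    have "CARD('n) - 2 = a k + b k"
      using n[OF that] by (simp add: n_def)
    then show ?thesis
      using card_mass_outside_below[of blk k "card (blk -` {k})" "CARD('n) - 2"]
        assms(2) that compl_block_nonempty[OF assms(2,3) that] block_card[OF that] compl_card[OF that]
      by simp
  qed
  moreover have "- (real CARD('n) - 1) = - real n"
    by (simp add: n_def of_nat_diff)
  ultimately show ?thesis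
    by (simp add: n_def)
qed

section \<open>Comparing the counts at total \<open>d - 2\<close>\<close>

lemma ex_bounded_summands:
  fixes c :: "nat \<Rightarrow> nat"
  shows "N \<le> (\<Sum>k<t. c k) \<Longrightarrow> \<exists>b. (\<forall>k. b k \<le> c k) \<and> (\<Sum>k<t. b k) = N"
proof (induction t arbitrary: N)
  case 0
  then show ?case
    by (intro exI[of _ "\<lambda>_. 0"]) auto
next
  case (Suc t)
  define a where "a = min (c t) N"
  have "N - a \<le> (\<Sum>k<t. c k)"
    using Suc.prems by (simp add: a_def)
  then obtain b where b: "\<forall>k. b k \<le> c k" "(\<Sum>k<t. b k) = N - a"
    using Suc.IH by blast
  have "(\<Sum>k<t. (b(t := a)) k) = (\<Sum>k<t. b k)"
    by (intro sum.cong) auto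
  then show ?case
    using b by (intro exI[of _ "b(t := a)"]) (simp add: a_def)
qed

lemma ex_block_sums:
  fixes blk :: "'n::finite \<Rightarrow> nat"
  assumes "range blk \<subseteq> {..<t}" "\<forall>k<t. blk -` {k} \<noteq> {}"
  obtains y where "\<forall>k<t. sum y (blk -` {k}) = s k" "sum y UNIV = (\<Sum>k<t. s k)"
proof -
  define rep where "rep k = (SOME v. blk v = k)" for k
  have rep: "blk (rep k) = k" if "k < t" for k
  proof -
    have "\<exists>v. blk v = k"
      using assms(2) that by auto
    then show ?thesis
      unfolding rep_def by (rule someI_ex)
  qed
  define y where "y v = (if v = rep (blk v) then s (blk v) else 0)" for v
  have block_sum: "sum y (blk -` {k}) = s k" if "k < t" for k
  proof -
    have "sum y (blk -` {k}) = (\<Sum>v\<in>blk -` {k}. if v = rep k then s k else 0)"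
      by (intro sum.cong) (auto simp: y_def)
    also have "\<dots> = s k"
      using rep[OF that] by (simp add: sum.delta)
    finally show ?thesis .
  qed
  have "sum y UNIV = (\<Sum>k<t. sum y (blk -` {k}))"
    using sum_block_sums[of "{..<t}" blk y] assms(1) by simp
  also have "\<dots> = (\<Sum>k<t. s k)"
    by (intro sum.cong) (auto simp: block_sum)
  finally have "sum y UNIV = (\<Sum>k<t. s k)" .
  with block_sum show thesis
    using that by blast
qed

lemma sum_card_mass_outside_below_gt_two_blocks:
  fixes blk :: "'n::finite \<Rightarrow> nat"
  assumes "range blk \<subseteq> {..<2}" "\<forall>k<2. blk -` {k} \<noteq> {}"
  shows "card {y::'n \<Rightarrow> nat. sum y UNIV = CARD('n) - 2} <
    (\<Sum>k<2. card (mass_outside_below blk k (CARD('n) - 2) (card (blk -` {k}))))"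
proof -
  let ?B = "\<lambda>k. blk -` {k}"
  let ?L = "\<lambda>k. mass_outside_below blk k (CARD('n) - 2) (card (?B k))"
  let ?All = "{y::'n \<Rightarrow> nat. sum y UNIV = CARD('n) - 2}"
  have "blk v = 0 \<or> blk v = 1" for v
    using assms(1) by (auto simp: subset_eq less_2_cases_iff)
  then have compl: "- ?B 0 = ?B 1" "- ?B 1 = ?B 0"
    by auto
  have card_sum: "card (?B 0) + card (?B 1) = CARD('n)"
    using card_add_Compl[of "?B 0"] compl by simp
  have pos: "1 \<le> card (?B 0)" "1 \<le> card (?B 1)"
    using assms(2) by (auto simp: Suc_le_eq card_gt_0_iff)
  have L: "?L 0 = {y \<in> ?All. sum y (?B 1) < card (?B 0)}" "?L 1 = {y \<in> ?All. sum y (?B 0) < card (?B 1)}"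
    unfolding mass_outside_below_def compl by auto
  have cover: "?L 0 \<union> ?L 1 = ?All"
  proof (intro equalityI subsetI)
    fix y assume "y \<in> ?All"
    then have "sum y (?B 0) + sum y (?B 1) = CARD('n) - 2"
      using sum_Compl_add[of y "?B 0"] compl by simp
    then have "sum y (?B 1) < card (?B 0) \<or> sum y (?B 0) < card (?B 1)"
      using card_sum pos by linarith
    with \<open>y \<in> ?All\<close> show "y \<in> ?L 0 \<union> ?L 1"
      unfolding L by blast
  qed (auto simp: mass_outside_below_def)
  obtain y where y: "\<forall>k<2. sum y (?B k) = (if k = 0 then card (?B 1) - 1 else card (?B 0) - 1)"
      "sum y UNIV = (\<Sum>k<2::nat. if k = 0 then card (?B 1) - 1 else card (?B 0) - 1)"
    by (rule ex_block_sums[OF assms, of "\<lambda>k. if k = 0 then card (?B 1) - 1 else card (?B 0) - 1"])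
  have "sum y (?B 0) = card (?B 1) - 1" "sum y (?B 1) = card (?B 0) - 1"
    using y(1)[rule_format, of 0] y(1)[rule_format, of 1] by simp_all
  moreover have "sum y UNIV = CARD('n) - 2"
    using y(2) card_sum pos by (simp add: numeral_2_eq_2)
  ultimately have "y \<in> ?L 0 \<inter> ?L 1"
    using pos unfolding L by simp
  moreover have finite: "finite (?L k)" for k
    by (rule finite_subset[OF _ finite_fixed_total]) (auto simp: mass_outside_below_def)
  ultimately have "0 < card (?L 0 \<inter> ?L 1)"
    by (auto simp: card_gt_0_iff)
  have "(\<Sum>k<2. card (?L k)) = card (?L 0) + card (?L 1)"
    by (simp add: numeral_2_eq_2)
  also have "\<dots> = card ?All + card (?L 0 \<inter> ?L 1)"
    using card_Un_Int[OF finite finite, of 0 1] unfolding cover .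
  finally show ?thesis
    using \<open>0 < card (?L 0 \<inter> ?L 1)\<close> by simp
qed

lemma sum_card_mass_outside_below_less_many_blocks:
  fixes blk :: "'n::finite \<Rightarrow> nat"
  assumes "range blk \<subseteq> {..<t}" "\<forall>k<t. blk -` {k} \<noteq> {}" "3 \<le> t" "4 \<le> CARD('n)"
  shows "(\<Sum>k<t. card (mass_outside_below blk k (CARD('n) - 2) (card (blk -` {k})))) <
    card {y::'n \<Rightarrow> nat. sum y UNIV = CARD('n) - 2}"
proof -
  let ?B = "\<lambda>k. blk -` {k}"
  let ?q = "\<lambda>k. card (blk -` {k})"
  let ?L = "\<lambda>k. mass_outside_below blk k (CARD('n) - 2) (card (?B k))"
  let ?All = "{y::'n \<Rightarrow> nat. sum y UNIV = CARD('n) - 2}"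
  have pos: "1 \<le> ?q k" if "k < t" for k
    using assms(2) that by (auto simp: Suc_le_eq card_gt_0_iff)
  have third: "\<exists>m<t. m \<noteq> k \<and> m \<noteq> l" for k l :: nat
    using assms(3)
    by (intro exI[of _ "if k \<noteq> 0 \<and> l \<noteq> 0 then 0 else if k \<noteq> 1 \<and> l \<noteq> 1 then 1 else 2"]) auto
  have three: "?q k + ?q l + ?q m \<le> CARD('n)" if "k \<noteq> l" "k \<noteq> m" "l \<noteq> m" for k l m
  proof -
    have "?q l + ?q m = card (?B l \<union> ?B m)"
      using that by (intro card_Un_disjoint[symmetric]) auto
    also have "\<dots> \<le> card (- ?B k)"
      using that by (intro card_mono) auto
    finally show ?thesis
      using card_add_Compl[of "?B k"] by simp
  qed
  have disjoint: "?L k \<inter> ?L l = {}" if "k < t" "l < t" "k \<noteq> l" for k l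
  proof -
    obtain m where m: "m < t" "m \<noteq> k" "m \<noteq> l"
      using third by blast
    have "y \<notin> ?L l" if y: "y \<in> ?L k" for y
    proof
      assume "y \<in> ?L l"
      have "sum y (?B l) \<le> sum y (- ?B k)"
        using \<open>k \<noteq> l\<close> by (intro sum_mono2) auto
      moreover have "sum y (?B l) + sum y (- ?B l) = CARD('n) - 2"
        using sum_Compl_add[of y "?B l"] \<open>y \<in> ?L l\<close> by (simp add: mass_outside_below_def)
      moreover have "sum y (- ?B k) < ?q k" "sum y (- ?B l) < ?q l"
        using y \<open>y \<in> ?L l\<close> by (simp_all add: mass_outside_below_def)
      ultimately show False
        using three[of k l m] m pos[OF m(1)] \<open>k \<noteq> l\<close> by linarith
    qed
    then show ?thesis by blast
  qed
  define c where "c k = CARD('n) - 2 - ?q k" for k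
  have q_le: "?q k + 2 \<le> CARD('n)" if "k < t" for k
  proof -
    obtain l where "l < t" "l \<noteq> k"
      using third by blast
    moreover obtain m where "m < t" "m \<noteq> k" "m \<noteq> l"
      using third by blast
    ultimately show ?thesis
      using three[of k l m] pos[of l] pos[of m] by linarith
  qed
  have "(\<Sum>k<t. ?q k) = CARD('n)"
    using sum_block_sums[of "{..<t}" blk "\<lambda>_. 1::nat"] assms(1) by simp
  moreover have "(\<Sum>k<t. c k) + (\<Sum>k<t. ?q k) = t * (CARD('n) - 2)"
    using q_le by (simp add: c_def flip: sum.distrib)
  ultimately have "CARD('n) - 2 \<le> (\<Sum>k<t. c k)"
    using assms(3,4) mult_le_mono1[OF assms(3), of "CARD('n) - 2"] by linarith
  then obtain b where b: "\<forall>k. b k \<le> c k" "(\<Sum>k<t. b k) = CARD('n) - 2"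
    using ex_bounded_summands by blast
  obtain y where y: "\<forall>k<t. sum y (?B k) = b k" "sum y UNIV = (\<Sum>k<t. b k)"
    by (rule ex_block_sums[OF assms(1,2), of b])
  have "y \<in> ?All - (\<Union>k<t. ?L k)"
  proof -
    have "y \<notin> ?L k" if "k < t" for k
    proof -
      have "b k + sum y (- ?B k) = CARD('n) - 2"
        using sum_Compl_add[of y "?B k"] y b(2) that by simp
      moreover have "b k \<le> CARD('n) - 2 - ?q k"
        using b(1) by (simp add: c_def)
      ultimately have "?q k \<le> sum y (- ?B k)"
        using q_le[OF that] by linarith
      then show ?thesis
        by (simp add: mass_outside_below_def)
    qed
    then show ?thesis
      using y(2) b(2) by auto
  qed
  moreover have finite: "finite ?All"
    by (rule finite_fixed_total)
  moreover have "(\<Union>k<t. ?L k) \<subseteq> ?All"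
    by (auto simp: mass_outside_below_def)
  ultimately have "card (\<Union>k<t. ?L k) < card ?All"
    by (intro psubset_card_mono) auto
  moreover have "card (\<Union>k<t. ?L k) = (\<Sum>k<t. card (?L k))"
    using disjoint finite_subset[OF _ finite] by (intro card_UN_disjoint) (auto simp: mass_outside_below_def)
  ultimately show ?thesis
    by simp
qed

lemma card_fixed_total_ne_sum_card_mass_outside_below:
  fixes blk :: "'n::finite \<Rightarrow> nat"
  assumes "range blk \<subseteq> {..<t}" "\<forall>k<t. blk -` {k} \<noteq> {}" "2 \<le> t" "t = 2 \<or> 4 \<le> CARD('n)"
  shows "card {y::'n \<Rightarrow> nat. sum y UNIV = CARD('n) - 2} \<noteq>
    (\<Sum>k<t. card (mass_outside_below blk k (CARD('n) - 2) (card (blk -` {k}))))"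
proof (cases "t = 2")
  case True
  then have "range blk \<subseteq> {..<2}" "\<forall>k<2. blk -` {k} \<noteq> {}"
    using assms(1,2) by simp_all
  then show ?thesis
    using less_imp_neq[OF sum_card_mass_outside_below_gt_two_blocks] True by simp
next
  case False
  then have "3 \<le> t" "4 \<le> CARD('n)"
    using assms(3,4) by auto
  then show ?thesis
    using sum_card_mass_outside_below_less_many_blocks[OF assms(1,2)] by linarith
qed

lemma nth_eq_one_if_sum_le_length:
  fixes q :: "nat list"
  assumes "\<forall>k<length q. 1 \<le> q ! k" "(\<Sum>k<length q. q ! k) \<le> length q" "k < length q"
  shows "q ! k = 1"
proof -
  have "(\<Sum>k<length q. q ! k) = (\<Sum>k<length q. (q ! k - 1) + 1)"
    using assms(1) by (intro sum.cong) auto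
  then have "(\<Sum>k<length q. q ! k) = (\<Sum>k<length q. q ! k - 1) + length q"
    by (simp add: sum_Suc)
  then have "\<forall>k<length q. q ! k - 1 = 0"
    using assms(2) by simp
  then show ?thesis
    using assms(1,3) by (simp add: le_antisym)
qed

lemma length_eq_two_or_sum_ge_four:
  fixes q :: "nat list"
  assumes "\<forall>k<length q. 1 \<le> q ! k" "2 \<le> length q" "3 \<le> (\<Sum>k<length q. q ! k)"
    and "q \<noteq> [1, 1, 1]"
  shows "length q = 2 \<or> 4 \<le> (\<Sum>k<length q. q ! k)"
proof (rule ccontr)
  assume "\<not> ?thesis"
  then have "3 \<le> length q" "(\<Sum>k<length q. q ! k) \<le> 3"
    using assms(2) by auto
  then have ones: "q ! k = 1" if "k < length q" for k
    using nth_eq_one_if_sum_le_length[OF assms(1) _ that] by linarith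
  then have "(\<Sum>k<length q. q ! k) = length q"
    by simp
  then have "q = replicate 3 1"
    using ones \<open>3 \<le> length q\<close> \<open>(\<Sum>k<length q. q ! k) \<le> 3\<close> by (intro nth_equalityI) simp_all
  with assms(4) show False
    by (simp add: numeral_3_eq_3)
qed

theorem proposition1p9:
  fixes q :: "nat list" and blk :: "'n::finite \<Rightarrow> nat" and p :: "real poly"
  assumes "CARD('n) \<ge> 3"
    and "length q \<ge> 2"
    and "sorted_wrt (\<ge>) q"
    and "\<forall>k < length q. q ! k \<ge> 1"
    and "\<forall>v. blk v < length q"
    and "\<forall>k < length q. card {v. blk v = k} = q ! k"
    and "q \<noteq> [1, 1, 1]"
    and "is_ehrhart_poly (edge_polytope_multipartite blk) p"
  shows "poly p (- (real CARD('n) - 1)) \<noteq> 0"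
proof -
  have blocks: "range blk \<subseteq> {..<length q}"
    using assms(5) by auto
  have card_block: "card (blk -` {k}) = q ! k" if "k < length q" for k
    using assms(6) that by (simp add: vimage_def)
  then have nonempty: "\<forall>k<length q. blk -` {k} \<noteq> {}"
    using assms(4) by fastforce
  have "CARD('n) = (\<Sum>k<length q. q ! k)"
    using sum_block_sums[of "{..<length q}" blk "\<lambda>_. 1::nat"] blocks card_block by simp
  then have "length q = 2 \<or> 4 \<le> CARD('n)"
    using length_eq_two_or_sum_ge_four[OF assms(4,2) _ assms(7)] assms(1) by simp
  then have "real (card {y::'n \<Rightarrow> nat. sum y UNIV = CARD('n) - 2}) \<noteq>
      (\<Sum>k<length q. real (card (mass_outside_below blk k (CARD('n) - 2) (card (blk -` {k})))))"
    unfolding of_nat_sum[symmetric] of_nat_eq_iff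
    by (rule card_fixed_total_ne_sum_card_mass_outside_below[OF blocks nonempty assms(2)])
  then show ?thesis
    using ehrhart_multipartite_at_one_minus_card[OF blocks nonempty assms(2,8)] by simp
qed

end
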